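(* Let $W\in\mathcal W_0$, $w=\int_{[0,1]^2}W\,dxdy$ and $\ell(W)=W(1-W)$, and suppose $\int_{[0,1]^2}\ell(W)(x,y)\,dxdy\ne0$. For $\delta>0$ let $\xi=\xi(\delta)>0$ be the unique solution of $\int_{[0,1]^2}\frac{\xi W(x,y)}{1-W(x,y)+\xi W(x,y)}\,dxdy=w+\delta$, and set $W^\ast_\delta=\frac{W\xi}{1-W+W\xi}$. Then for sufficiently small $\delta>0$, $$W^\ast_\delta=W+\delta\,\frac{\ell(W)}{\int_{[0,1]^2}\ell(W)(x,y)\,dxdy}+O(\delta^2).$$
   Context: $\mathcal W_0$ is the set of symmetric measurable $W:[0,1]^2\to[0,1]$. $O(\delta^2)$ denotes a function on $[0,1]^2$ bounded in absolute value by $C\delta^2$ with $C$ independent of $\delta$ and $(x,y)$. *)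

theory Defs
  imports "HOL-Analysis.Analysis"
begin

definition unit_sq :: "(real \<times> real) set" where
  "unit_sq = {0..1} \<times> {0..1}"

definition sq_int :: "(real \<Rightarrow> real \<Rightarrow> real) \<Rightarrow> real" where
  "sq_int f = (LINT p : unit_sq | lebesgue. f (fst p) (snd p))"

text \<open>The set W_0: symmetric measurable functions [0,1]^2 -> [0,1]
  (values outside the unit square are irrelevant).\<close>
definition graphon :: "(real \<Rightarrow> real \<Rightarrow> real) \<Rightarrow> bool" where
  "graphon W \<longleftrightarrow>
     set_borel_measurable lebesgue unit_sq (\<lambda>p. W (fst p) (snd p)) \<and>
     (\<forall>x\<in>{0..1}. \<forall>y\<in>{0..1}. W x y = W y x) \<and>
     (\<forall>x\<in>{0..1}. \<forall>y\<in>{0..1}. 0 \<le> W x y \<and> W x y \<le> 1)"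

end

theory Submission
  imports Defs
begin

text \<open>
  Put \<open>\<ell>(w) = w (1 - w)\<close>. For a density \<open>w \<in> [0,1]\<close> the tilted density moves by
  \<open>(\<xi> - 1) \<ell>(w) / (1 + (\<xi> - 1) w)\<close>. This is nonpositive for \<open>\<xi> \<le> 1\<close>, so a positive
  \<open>\<delta>\<close> forces \<open>\<xi> > 1\<close>; then the denominator lies in \<open>[1, \<xi>]\<close> and the increment lies
  between \<open>(\<xi> - 1)/\<xi> \<ell>(w)\<close> and \<open>(\<xi> - 1) \<ell>(w)\<close>. Integrating, \<open>\<delta> / \<integral>\<ell>(W)\<close> lies in
  the same interval \<open>[(\<xi> - 1)/\<xi>, \<xi> - 1]\<close>, so pointwise the error of the linear
  approximation is at most the interval length \<open>(\<xi> - 1)\<^sup>2/\<xi>\<close>. Finally the lower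
  bound and \<open>\<delta> < \<integral>\<ell>(W)/2\<close> give \<open>\<xi> - 1 \<le> 2 \<delta> / \<integral>\<ell>(W)\<close>.
\<close>

definition tilt :: "real \<Rightarrow> real \<Rightarrow> real" where
  "tilt \<xi> w = \<xi> * w / (1 - w + \<xi> * w)"

definition sq_integrable :: "(real \<Rightarrow> real \<Rightarrow> real) \<Rightarrow> bool" where
  "sq_integrable f \<longleftrightarrow> set_integrable lebesgue unit_sq (\<lambda>p. f (fst p) (snd p))"

lemma tilt_denominator_pos:
  fixes w \<xi> :: real
  assumes "0 \<le> w" "w \<le> 1" "0 < \<xi>"
  shows "0 < 1 - w + \<xi> * w"
proof (cases "w = 0")
  case False
  with assms have "0 < \<xi> * w" by simp
  with assms show ?thesis by linarith
qed simp

lemma tilt_range: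
  fixes w \<xi> :: real
  assumes "0 \<le> w" "w \<le> 1" "0 < \<xi>"
  shows "0 \<le> tilt \<xi> w" "tilt \<xi> w \<le> 1"
  using tilt_denominator_pos[OF assms] assms
  by (simp_all add: tilt_def divide_le_eq)

lemma tilt_sub_eq:
  fixes w \<xi> :: real
  assumes "0 \<le> w" "w \<le> 1" "0 < \<xi>"
  shows "tilt \<xi> w - w = (\<xi> - 1) * (w * (1 - w)) / (1 - w + \<xi> * w)"
  using tilt_denominator_pos[OF assms]
  by (simp add: tilt_def field_simps)

lemma tilt_le_self:
  fixes w \<xi> :: real
  assumes "0 \<le> w" "w \<le> 1" "0 < \<xi>" "\<xi> \<le> 1"
  shows "tilt \<xi> w \<le> w"
proof -
  have "(\<xi> - 1) * (w * (1 - w)) \<le> 0"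
    using assms by (intro mult_nonpos_nonneg) auto
  then have "(\<xi> - 1) * (w * (1 - w)) / (1 - w + \<xi> * w) \<le> 0"
    using tilt_denominator_pos[OF assms(1-3)] by (simp add: divide_nonpos_pos)
  then show ?thesis
    using tilt_sub_eq[OF assms(1-3)] by simp
qed

lemma tilt_sub_bounds:
  fixes w \<xi> :: real
  assumes "0 \<le> w" "w \<le> 1" "1 \<le> \<xi>"
  shows "(\<xi> - 1) / \<xi> * (w * (1 - w)) \<le> tilt \<xi> w - w"
    and "tilt \<xi> w - w \<le> (\<xi> - 1) * (w * (1 - w))"
proof -
  define c where "c = (\<xi> - 1) * (w * (1 - w))"
  define d where "d = 1 - w + \<xi> * w"
  have c: "0 \<le> c"
    using assms by (simp add: c_def)
  have d: "1 \<le> d" "d \<le> \<xi>"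
    using assms mult_right_mono[of 1 \<xi> w] mult_nonneg_nonneg[of "\<xi> - 1" "1 - w"]
    by (auto simp: d_def algebra_simps)
  have "tilt \<xi> w - w = c / d"
    using tilt_sub_eq[OF assms(1,2)] assms(3) by (simp add: c_def d_def)
  moreover have "c / \<xi> \<le> c / d"
    using c d by (intro divide_left_mono) auto
  moreover have "c / d \<le> c"
    using c d mult_left_mono[of 1 d c] by (simp add: divide_le_eq)
  ultimately show "(\<xi> - 1) / \<xi> * (w * (1 - w)) \<le> tilt \<xi> w - w"
    and "tilt \<xi> w - w \<le> (\<xi> - 1) * (w * (1 - w))"
    by (simp_all add: c_def)
qed

lemma unit_sq_sets_lborel: "unit_sq \<in> sets lborel"
proof -
  have "closed unit_sq"
    unfolding unit_sq_def by (intro closed_Times) auto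
  then show ?thesis
    by simp
qed

lemma emeasure_unit_sq_finite: "emeasure lebesgue unit_sq < \<infinity>"
proof -
  have "bounded unit_sq"
    unfolding unit_sq_def by (intro bounded_Times) auto
  then show ?thesis
    using unit_sq_sets_lborel emeasure_bounded_finite by (simp add: emeasure_completion)
qed

lemma graphon_range:
  assumes "graphon W" "x \<in> {0..1}" "y \<in> {0..1}"
  shows "0 \<le> W x y" "W x y \<le> 1"
  using assms by (auto simp: graphon_def)

text \<open>Only \<open>indicator unit_sq * W\<close> is known to be measurable, hence \<open>G 0 = 0\<close>.\<close>
lemma sq_integrable_graphon_comp:
  fixes G :: "real \<Rightarrow> real"
  assumes "graphon W" "G \<in> borel_measurable borel" "G 0 = 0"
    and "\<And>y. 0 \<le> y \<Longrightarrow> y \<le> 1 \<Longrightarrow> \<bar>G y\<bar> \<le> B"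
  shows "sq_integrable (\<lambda>x y. G (W x y))"
proof -
  define w where "w = (\<lambda>p. indicator unit_sq p * W (fst p) (snd p) :: real)"
  have "w \<in> borel_measurable lebesgue"
    using assms(1) by (simp add: graphon_def set_borel_measurable_def w_def)
  then have "(\<lambda>p. G (w p)) \<in> borel_measurable lebesgue"
    using assms(2) by measurable
  moreover have "(\<lambda>p. indicator unit_sq p *\<^sub>R G (W (fst p) (snd p))) = (\<lambda>p. G (w p))"
    using assms(3) by (auto simp: w_def split: split_indicator)
  moreover have "integrable lebesgue (\<lambda>p. G (w p))"
  proof (rule integrableI_bounded_set[where A = unit_sq and B = B])
    show "AE p in lebesgue. p \<in> unit_sq \<longrightarrow> norm (G (w p)) \<le> B"
      using assms(1,4) by (auto simp: graphon_def unit_sq_def w_def)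
    show "AE p in lebesgue. p \<notin> unit_sq \<longrightarrow> G (w p) = 0"
      using assms(3) by (simp add: w_def)
  qed (use \<open>(\<lambda>p. G (w p)) \<in> borel_measurable lebesgue\<close> unit_sq_sets_lborel
         emeasure_unit_sq_finite in auto)
  ultimately show ?thesis
    by (simp add: sq_integrable_def set_integrable_def)
qed

lemma sq_integrable_diff:
  "sq_integrable f \<Longrightarrow> sq_integrable g \<Longrightarrow> sq_integrable (\<lambda>x y. f x y - g x y)"
  unfolding sq_integrable_def by (rule set_integral_diff(1))

lemma sq_integrable_cmult: "sq_integrable f \<Longrightarrow> sq_integrable (\<lambda>x y. c * f x y)"
  unfolding sq_integrable_def by simp

lemma sq_int_diff:
  "sq_integrable f \<Longrightarrow> sq_integrable g \<Longrightarrow>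
    sq_int (\<lambda>x y. f x y - g x y) = sq_int f - sq_int g"
  unfolding sq_integrable_def sq_int_def by (rule set_integral_diff(2))

lemma sq_int_cmult: "sq_int (\<lambda>x y. c * f x y) = c * sq_int f"
  unfolding sq_int_def by simp

lemma sq_int_mono:
  assumes "sq_integrable f" "sq_integrable g"
    and "\<And>x y. x \<in> {0..1} \<Longrightarrow> y \<in> {0..1} \<Longrightarrow> f x y \<le> g x y"
  shows "sq_int f \<le> sq_int g"
  using assms unfolding sq_integrable_def sq_int_def
  by (intro set_integral_mono) (auto simp: unit_sq_def)

lemma sq_integrable_graphon: "graphon W \<Longrightarrow> sq_integrable W"
  using sq_integrable_graphon_comp[of W "\<lambda>y. y" 1] by simp

lemma sq_integrable_graphon_variance:
  "graphon W \<Longrightarrow> sq_integrable (\<lambda>x y. W x y * (1 - W x y))"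
  by (rule sq_integrable_graphon_comp[where B = 1]) (auto simp: mult_le_one)

lemma sq_integrable_graphon_tilt:
  "graphon W \<Longrightarrow> 0 < \<xi> \<Longrightarrow> sq_integrable (\<lambda>x y. tilt \<xi> (W x y))"
  by (rule sq_integrable_graphon_comp[where B = 1]) (auto simp: tilt_range, simp_all add: tilt_def)

lemma sq_int_graphon_variance_nonneg:
  assumes "graphon W"
  shows "0 \<le> sq_int (\<lambda>x y. W x y * (1 - W x y))"
proof -
  have "sq_int (\<lambda>x y. 0) \<le> sq_int (\<lambda>x y. W x y * (1 - W x y))"
    using assms by (intro sq_int_mono sq_integrable_graphon_variance)
      (auto simp: sq_integrable_def graphon_range)
  then show ?thesis
    by (simp add: sq_int_def)
qed

lemma sq_int_tilt_le:
  assumes "graphon W" "0 < \<xi>" "\<xi> \<le> 1"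
  shows "sq_int (\<lambda>x y. tilt \<xi> (W x y)) \<le> sq_int W"
  using assms sq_int_mono[of "\<lambda>x y. tilt \<xi> (W x y)" W]
  by (simp add: sq_integrable_graphon sq_integrable_graphon_tilt tilt_le_self graphon_range)

lemma sq_int_tilt_sub_bounds:
  assumes "graphon W" "1 \<le> \<xi>"
  defines "V \<equiv> sq_int (\<lambda>x y. W x y * (1 - W x y))"
  shows "(\<xi> - 1) / \<xi> * V \<le> sq_int (\<lambda>x y. tilt \<xi> (W x y)) - sq_int W"
    and "sq_int (\<lambda>x y. tilt \<xi> (W x y)) - sq_int W \<le> (\<xi> - 1) * V"
proof -
  have int_tilt: "sq_integrable (\<lambda>x y. tilt \<xi> (W x y))"
    using assms by (simp add: sq_integrable_graphon_tilt)
  have int_incr: "sq_integrable (\<lambda>x y. tilt \<xi> (W x y) - W x y)"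
    using assms int_tilt by (simp add: sq_integrable_diff sq_integrable_graphon)
  have incr: "sq_int (\<lambda>x y. tilt \<xi> (W x y) - W x y) = sq_int (\<lambda>x y. tilt \<xi> (W x y)) - sq_int W"
    using assms int_tilt by (simp add: sq_int_diff sq_integrable_graphon)
  have int_var: "sq_integrable (\<lambda>x y. c * (W x y * (1 - W x y)))" for c
    using assms by (simp add: sq_integrable_cmult sq_integrable_graphon_variance)
  have "sq_int (\<lambda>x y. (\<xi> - 1) / \<xi> * (W x y * (1 - W x y)))
      \<le> sq_int (\<lambda>x y. tilt \<xi> (W x y) - W x y)"
    by (rule sq_int_mono[OF int_var int_incr]) (use assms(1,2) graphon_range tilt_sub_bounds in blast)
  then show "(\<xi> - 1) / \<xi> * V \<le> sq_int (\<lambda>x y. tilt \<xi> (W x y)) - sq_int W"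
    by (simp only: incr sq_int_cmult V_def)
  have "sq_int (\<lambda>x y. tilt \<xi> (W x y) - W x y)
      \<le> sq_int (\<lambda>x y. (\<xi> - 1) * (W x y * (1 - W x y)))"
    by (rule sq_int_mono[OF int_incr int_var]) (use assms(1,2) graphon_range tilt_sub_bounds in blast)
  then show "sq_int (\<lambda>x y. tilt \<xi> (W x y)) - sq_int W \<le> (\<xi> - 1) * V"
    by (simp only: incr sq_int_cmult V_def)
qed

lemma tilt_sub_linear_approx:
  fixes w \<xi> r :: real
  assumes "0 \<le> w" "w \<le> 1" "1 \<le> \<xi>" "(\<xi> - 1) / \<xi> \<le> r" "r \<le> \<xi> - 1"
  shows "\<bar>tilt \<xi> w - w - r * (w * (1 - w))\<bar> \<le> (\<xi> - 1)\<^sup>2"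
proof -
  define l where "l = w * (1 - w)"
  have l: "0 \<le> l" "l \<le> 1"
    using assms(1,2) by (auto simp: l_def mult_le_one)
  have "(\<xi> - 1) / \<xi> * l \<le> r * l" "r * l \<le> (\<xi> - 1) * l"
    using mult_right_mono[OF assms(4) l(1)] mult_right_mono[OF assms(5) l(1)] by simp_all
  then have "\<bar>tilt \<xi> w - w - r * l\<bar> \<le> ((\<xi> - 1) - (\<xi> - 1) / \<xi>) * l"
    using tilt_sub_bounds[OF assms(1-3)] by (simp add: l_def abs_le_iff algebra_simps)
  also have "\<dots> = (\<xi> - 1)\<^sup>2 * (l / \<xi>)"
    using assms(3) by (simp add: field_simps power2_eq_square)
  also have "\<dots> \<le> (\<xi> - 1)\<^sup>2"
    using assms(3) l by (intro mult_left_le) (simp_all add: divide_le_eq)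
  finally show ?thesis
    by (simp add: l_def)
qed

lemma tilt_parameter_bound:
  fixes V \<delta> \<xi> :: real
  assumes "0 < V" "\<delta> < V / 2" "1 \<le> \<xi>" "(\<xi> - 1) / \<xi> * V \<le> \<delta>"
  shows "\<xi> - 1 \<le> 2 * \<delta> / V"
proof -
  have incr: "(\<xi> - 1) * V \<le> \<delta> * \<xi>"
    using assms(3,4) by (simp add: field_simps)
  have "\<delta> * \<xi> < V / 2 * \<xi>"
    using assms(2,3) by (intro mult_strict_right_mono) auto
  with incr have "V * \<xi> < V * 2"
    by (simp add: algebra_simps)
  then have "\<xi> < 2"
    using assms(1) by simp
  moreover have "0 \<le> \<delta>"
    using assms(1,3,4) by (simp add: order.trans[rotated])
  ultimately have "\<delta> * \<xi> \<le> 2 * \<delta>"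
    using mult_left_mono[of \<xi> 2 \<delta>] by (simp add: mult.commute)
  with incr show ?thesis
    using assms(1) by (simp add: le_divide_eq)
qed

theorem lemma5p1:
  fixes W :: "real \<Rightarrow> real \<Rightarrow> real"
  assumes "graphon W"
    and "sq_int (\<lambda>x y. W x y * (1 - W x y)) \<noteq> 0"
  shows "\<exists>C \<delta>0. \<delta>0 > 0 \<and>
    (\<forall>\<delta> \<xi>. 0 < \<delta> \<and> \<delta> < \<delta>0 \<and> 0 < \<xi> \<and>
       sq_int (\<lambda>x y. \<xi> * W x y / (1 - W x y + \<xi> * W x y)) = sq_int W + \<delta> \<longrightarrow>
       (\<forall>x\<in>{0..1}. \<forall>y\<in>{0..1}.
          \<bar>W x y * \<xi> / (1 - W x y + W x y * \<xi>) - W x y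
             - \<delta> * (W x y * (1 - W x y)) / sq_int (\<lambda>x y. W x y * (1 - W x y))\<bar>
          \<le> C * \<delta>\<^sup>2))"
proof -
  define V where "V = sq_int (\<lambda>x y. W x y * (1 - W x y))"
  have "0 < V"
    using sq_int_graphon_variance_nonneg[OF assms(1)] assms(2) by (simp add: V_def)
  have "\<bar>tilt \<xi> (W x y) - W x y - \<delta> / V * (W x y * (1 - W x y))\<bar> \<le> 4 / V\<^sup>2 * \<delta>\<^sup>2"
    if "0 < \<delta>" "\<delta> < V / 2" "0 < \<xi>" "sq_int (\<lambda>x y. tilt \<xi> (W x y)) = sq_int W + \<delta>"
      and "x \<in> {0..1}" "y \<in> {0..1}" for \<delta> \<xi> x y
  proof -
    have "1 \<le> \<xi>"
      using sq_int_tilt_le[OF assms(1) \<open>0 < \<xi>\<close>] that(1,4) by force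
    have lower: "(\<xi> - 1) / \<xi> * V \<le> \<delta>" and upper: "\<delta> \<le> (\<xi> - 1) * V"
      using sq_int_tilt_sub_bounds[OF assms(1) \<open>1 \<le> \<xi>\<close>] that(4) by (simp_all add: V_def)
    have "(\<xi> - 1) / \<xi> \<le> \<delta> / V" "\<delta> / V \<le> \<xi> - 1"
      using lower upper \<open>0 < V\<close> by (simp_all add: le_divide_eq divide_le_eq)
    then have "\<bar>tilt \<xi> (W x y) - W x y - \<delta> / V * (W x y * (1 - W x y))\<bar> \<le> (\<xi> - 1)\<^sup>2"
      by (intro tilt_sub_linear_approx graphon_range[OF assms(1) that(5,6)] \<open>1 \<le> \<xi>\<close>)
    also have "\<dots> \<le> (2 * \<delta> / V)\<^sup>2"
      using tilt_parameter_bound[OF \<open>0 < V\<close> that(2) \<open>1 \<le> \<xi>\<close> lower] \<open>1 \<le> \<xi>\<close>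
      by (intro power_mono) simp_all
    also have "\<dots> = 4 / V\<^sup>2 * \<delta>\<^sup>2"
      by (simp add: power_divide power_mult_distrib)
    finally show ?thesis .
  qed
  then show ?thesis
    using \<open>0 < V\<close> unfolding V_def by (intro exI[of _ "4 / V\<^sup>2"] exI[of _ "V / 2"])
      (auto simp: tilt_def mult.commute V_def)
qed

end
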